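(* Let $H,K$ be $n$-Hilbert spaces, fix $a_2,\dots,a_n\in H$, $b_2,\dots,b_n\in K$, $C_1\in\mathcal{GB}(H_F)$, $C_2\in\mathcal{GB}(K_G)$. Let $\{f_i\}_{i=1}^\infty$ be a $C_1$-controlled frame associated to $(a_2,\dots,a_n)$ for $H$ with bounds $A,B$ and $\{g_i\}_{i=1}^\infty$ a $C_2$-controlled frame associated to $(b_2,\dots,b_n)$ for $K$ with bounds $C,D$. Suppose that for each $f\in H_F$ and $g\in K_G$: (i) $\sum_{i=1}^\infty\langle f,f_i|a_2,\dots,a_n\rangle_1\langle C_2g_i,g|b_2,\dots,b_n\rangle_2=0$, and (ii) $\sum_{i=1}^\infty\langle g,g_i|b_2,\dots,b_n\rangle_2\langle C_1f_i,f|a_2,\dots,a_n\rangle_1=0$. Then $\{f_i\oplus g_i\}_{i=1}^\infty$ is a $(C_1\oplus C_2)$-controlled frame associated to $(a_2\oplus b_2,\dots,a_n\oplus b_n)$ for $H\oplus K$.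
   Context: Let $n\ge2$. For a complex $n$-Hilbert space $H$ with $n$-inner product $\langle\cdot,\cdot|\cdot,\dots,\cdot\rangle_1$ and $n$-norm $\|x_1,\dots,x_n\|_1=\langle x_1,x_1|x_2,\dots,x_n\rangle_1^{1/2}$, and fixed $a_2,\dots,a_n\in H$, $F=\{a_2,\dots,a_n\}$: $\langle x,y\rangle_F=\langle x,y|a_2,\dots,a_n\rangle_1$ is a semi-inner product on $H$ inducing an inner product on $H/L_F$ ($L_F=\mathrm{span}\,F$); identifying $H/L_F$ with an algebraic complement of $L_F$, $H_F$ is its Hilbert completion, with norm written $\|f,a_2,\dots,a_n\|_1$. Likewise $K$ with $\langle\cdot,\cdot|\cdot,\dots,\cdot\rangle_2$, $G=\{b_2,\dots,b_n\}$, Hilbert space $K_G$. $\mathcal{GB}(\cdot)$: bounded operators with bounded inverse. For $C\in\mathcal{GB}(H_F)$, $\{f_i\}\subseteq H$ is a $C$-controlled frame associated to $(a_2,\dots,a_n)$ for $H$ with bounds $A,B$ ($0<A\le B<\infty$) if $A\|f,a_2,\dots,a_n\|_1^2\le\sum_i\langle f,f_i|a_2,\dots,a_n\rangle_1\langle Cf_i,f|a_2,\dots,a_n\rangle_1\le B\|f,a_2,\dots,a_n\|_1^2$ for all $f\in H_F$ (similarly for $K$). The direct sum $H\oplus K$ is the $n$-Hilbert space with $n$-inner product $\langle f_1\oplus g_1,f_2\oplus g_2|f_3\oplus g_3,\dots,f_n\oplus g_n\rangle=\langle f_1,f_2|f_3,\dots,f_n\rangle_1+\langle g_1,g_2|g_3,\dots,g_n\rangle_2$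 and with $n$-norm defined by $\|f_1\oplus g_1,\dots,f_n\oplus g_n\|=\|f_1,\dots,f_n\|_1+\|g_1,\dots,g_n\|_2$. $C_1\oplus C_2$ acts on $H_F\oplus K_G$ by $(C_1\oplus C_2)(f\oplus g)=C_1f\oplus C_2g$. $\{f_i\oplus g_i\}$ is a $(C_1\oplus C_2)$-controlled frame associated to $(a_2\oplus b_2,\dots,a_n\oplus b_n)$ for $H\oplus K$ if there are $0<A'\le B'<\infty$ such that for all $f\in H_F$, $g\in K_G$: $A'\|f\oplus g,a_2\oplus b_2,\dots,a_n\oplus b_n\|^2\le\sum_i\langle f\oplus g,f_i\oplus g_i|a_2\oplus b_2,\dots,a_n\oplus b_n\rangle\langle(C_1\oplus C_2)(f_i\oplus g_i),f\oplus g|a_2\oplus b_2,\dots,a_n\oplus b_n\rangle\le B'\|f\oplus g,a_2\oplus b_2,\dots,a_n\oplus b_n\|^2$. *)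

theory Defs
  imports "HOL-Analysis.Analysis" "HOL-Library.Complex_Order" "HOL-Library.Multiset"
begin

text \<open>Complex vector spaces are modelled as abelian groups 'a with a complex
  scalar multiplication s satisfying the module axioms (locale module).\<close>

definition lin_dep_list :: "(complex \<Rightarrow> 'a::ab_group_add \<Rightarrow> 'a) \<Rightarrow> 'a list \<Rightarrow> bool" where
  "lin_dep_list s vs \<longleftrightarrow>
     (\<exists>c::nat \<Rightarrow> complex. (\<exists>i<length vs. c i \<noteq> 0) \<and> (\<Sum>i<length vs. s (c i) (vs ! i)) = 0)"

text \<open>n-inner product (Misiak): ip x y zs stands for <x,y|x_2,...,x_n> with zs = [x_2,...,x_n].\<close>
definition n_inner_product ::
  "nat \<Rightarrow> (complex \<Rightarrow> 'a::ab_group_add \<Rightarrow> 'a) \<Rightarrow> ('a \<Rightarrow> 'a \<Rightarrow> 'a list \<Rightarrow> complex) \<Rightarrow> bool" where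
  "n_inner_product n s ip \<longleftrightarrow> module s \<and>
     (\<forall>x zs. length zs = n - 1 \<longrightarrow>
        ip x x zs \<in> \<real> \<and> 0 \<le> Re (ip x x zs) \<and> (ip x x zs = 0 \<longleftrightarrow> lin_dep_list s (x # zs))) \<and>
     (\<forall>x zs y ys. length zs = n - 1 \<longrightarrow> mset (y # ys) = mset (x # zs) \<longrightarrow>
        ip x x zs = ip y y ys) \<and>
     (\<forall>x y zs. length zs = n - 1 \<longrightarrow> ip x y zs = cnj (ip y x zs)) \<and>
     (\<forall>c x y zs. length zs = n - 1 \<longrightarrow> ip (s c x) y zs = c * ip x y zs) \<and>
     (\<forall>x x' y zs. length zs = n - 1 \<longrightarrow> ip (x + x') y zs = ip x y zs + ip x' y zs)"

definition nnorm :: "('a \<Rightarrow> 'a \<Rightarrow> 'a list \<Rightarrow> complex) \<Rightarrow> 'a \<Rightarrow> 'a list \<Rightarrow> real" where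
  "nnorm ip x zs = sqrt (Re (ip x x zs))"

definition n_hilbert_space ::
  "nat \<Rightarrow> (complex \<Rightarrow> 'a::ab_group_add \<Rightarrow> 'a) \<Rightarrow> ('a \<Rightarrow> 'a \<Rightarrow> 'a list \<Rightarrow> complex) \<Rightarrow> bool" where
  "n_hilbert_space n s ip \<longleftrightarrow> n_inner_product n s ip \<and>
     (\<forall>X :: nat \<Rightarrow> 'a.
        (\<forall>zs. length zs = n - 1 \<longrightarrow>
           (\<forall>\<epsilon>>0. \<exists>N. \<forall>k\<ge>N. \<forall>m\<ge>N. nnorm ip (X k - X m) zs < \<epsilon>)) \<longrightarrow>
        (\<exists>x. \<forall>zs. length zs = n - 1 \<longrightarrow> (\<lambda>k. nnorm ip (X k - x) zs) \<longlonglongrightarrow> 0))"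

definition hnorm :: "('h \<Rightarrow> 'h \<Rightarrow> complex) \<Rightarrow> 'h \<Rightarrow> real" where
  "hnorm ip x = sqrt (Re (ip x x))"

definition complex_hilbert ::
  "(complex \<Rightarrow> 'h::ab_group_add \<Rightarrow> 'h) \<Rightarrow> ('h \<Rightarrow> 'h \<Rightarrow> complex) \<Rightarrow> bool" where
  "complex_hilbert s ip \<longleftrightarrow> module s \<and>
     (\<forall>x x' y. ip (x + x') y = ip x y + ip x' y) \<and>
     (\<forall>c x y. ip (s c x) y = c * ip x y) \<and>
     (\<forall>x y. ip x y = cnj (ip y x)) \<and>
     (\<forall>x. ip x x \<in> \<real> \<and> 0 \<le> Re (ip x x)) \<and>
     (\<forall>x. ip x x = 0 \<longrightarrow> x = 0) \<and>
     (\<forall>X :: nat \<Rightarrow> 'h.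
        (\<forall>\<epsilon>>0. \<exists>N. \<forall>k\<ge>N. \<forall>m\<ge>N. hnorm ip (X k - X m) < \<epsilon>) \<longrightarrow>
        (\<exists>x. (\<lambda>k. hnorm ip (X k - x)) \<longlonglongrightarrow> 0))"

text \<open>(sF, ipF, j) is a Hilbert completion of H modulo L_F, for the semi-inner product
  <x,y>_F = <x,y|a_2,...,a_n>: j is linear, preserves the inner product and has dense range.
  For f in H_F, <f, j x>_F extends <.,.|a_2,...,a_n> and hnorm ipF f is ||f,a_2,...,a_n||.\<close>
definition hilbert_completion ::
  "(complex \<Rightarrow> 'a::ab_group_add \<Rightarrow> 'a) \<Rightarrow> ('a \<Rightarrow> 'a \<Rightarrow> 'a list \<Rightarrow> complex) \<Rightarrow> 'a list \<Rightarrow>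
   (complex \<Rightarrow> 'h::ab_group_add \<Rightarrow> 'h) \<Rightarrow> ('h \<Rightarrow> 'h \<Rightarrow> complex) \<Rightarrow> ('a \<Rightarrow> 'h) \<Rightarrow> bool" where
  "hilbert_completion s ip as sF ipF j \<longleftrightarrow>
     complex_hilbert sF ipF \<and> module_hom s sF j \<and>
     (\<forall>x y. ipF (j x) (j y) = ip x y as) \<and>
     (\<forall>h \<epsilon>. \<epsilon> > 0 \<longrightarrow> (\<exists>x. hnorm ipF (h - j x) < \<epsilon>))"

definition GB :: "(complex \<Rightarrow> 'h::ab_group_add \<Rightarrow> 'h) \<Rightarrow> ('h \<Rightarrow> 'h \<Rightarrow> complex) \<Rightarrow> ('h \<Rightarrow> 'h) \<Rightarrow> bool" where
  "GB s ip C \<longleftrightarrow> module_hom s s C \<and> (\<exists>M. \<forall>x. hnorm ip (C x) \<le> M * hnorm ip x) \<and>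
     bij C \<and> (\<exists>M. \<forall>x. hnorm ip (inv C x) \<le> M * hnorm ip x)"

text \<open>Controlled frame associated to the fixed tuple: ip is the (extended) inner product
  on the completion, nrm the corresponding norm ||f, a_2, ..., a_n||, j the map from the
  underlying space to the completion, C the controlling operator.  The series must
  converge, and the inequalities are in the (partial) order of complex numbers,
  so the sum is in particular real.\<close>
definition controlled_frame ::
  "('h \<Rightarrow> 'h \<Rightarrow> complex) \<Rightarrow> ('h \<Rightarrow> real) \<Rightarrow> ('a \<Rightarrow> 'h) \<Rightarrow> ('h \<Rightarrow> 'h) \<Rightarrow> (nat \<Rightarrow> 'a)
   \<Rightarrow> real \<Rightarrow> real \<Rightarrow> bool" where
  "controlled_frame ip nrm j C fs A B \<longleftrightarrow> 0 < A \<and> A \<le> B \<and>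
     (\<forall>f. \<exists>s. (\<lambda>i. ip f (j (fs i)) * ip (C (j (fs i))) f) sums s \<and>
        complex_of_real (A * (nrm f)\<^sup>2) \<le> s \<and> s \<le> complex_of_real (B * (nrm f)\<^sup>2))"

definition dsum_ip :: "('h \<Rightarrow> 'h \<Rightarrow> complex) \<Rightarrow> ('k \<Rightarrow> 'k \<Rightarrow> complex) \<Rightarrow> 'h \<times> 'k \<Rightarrow> 'h \<times> 'k \<Rightarrow> complex" where
  "dsum_ip ipF ipG p q = ipF (fst p) (fst q) + ipG (snd p) (snd q)"

definition dsum_norm :: "('h \<Rightarrow> real) \<Rightarrow> ('k \<Rightarrow> real) \<Rightarrow> 'h \<times> 'k \<Rightarrow> real" where
  "dsum_norm nF nG p = nF (fst p) + nG (snd p)"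

end

theory Submission
  imports Defs
begin

text \<open>Expanding the direct-sum inner products, the series of the direct sum splits into the
  two frame series plus the two cross series, which vanish by hypothesis.  The bounds then
  come from comparing \<open>A x\<^sup>2 + C y\<^sup>2\<close> with \<open>(x + y)\<^sup>2\<close>, where the direct-sum norm is
  \<open>x + y\<close>: since \<open>x\<^sup>2 + y\<^sup>2\<close> lies between \<open>(x + y)\<^sup>2 / 2\<close> and \<open>(x + y)\<^sup>2\<close>,
  the bounds \<open>min A C / 2\<close> and \<open>max B D\<close> work.\<close>

lemma hnorm_nonneg:
  assumes "complex_hilbert s ip"
  shows "0 \<le> hnorm ip x"
proof -
  have "0 \<le> Re (ip x x)"
    using assms unfolding complex_hilbert_def by blast
  then show ?thesis
    unfolding hnorm_def by simp
qed

lemma weighted_sum_squares_lower: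
  fixes a c x y :: real
  assumes "0 \<le> a" "0 \<le> c"
  shows "min a c / 2 * (x + y)\<^sup>2 \<le> a * x\<^sup>2 + c * y\<^sup>2"
proof -
  have "(x + y)\<^sup>2 \<le> 2 * (x\<^sup>2 + y\<^sup>2)"
    using zero_le_power2[of "x - y"] by (simp add: power2_sum power2_diff)
  then have "min a c / 2 * (x + y)\<^sup>2 \<le> min a c / 2 * (2 * (x\<^sup>2 + y\<^sup>2))"
    using assms by (intro mult_left_mono) auto
  also have "\<dots> = min a c * x\<^sup>2 + min a c * y\<^sup>2"
    by (simp add: algebra_simps)
  also have "\<dots> \<le> a * x\<^sup>2 + c * y\<^sup>2"
    by (intro add_mono mult_right_mono) auto
  finally show ?thesis .
qed

lemma weighted_sum_squares_upper:
  fixes b d x y :: real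
  assumes "0 \<le> b" "0 \<le> d" "0 \<le> x" "0 \<le> y"
  shows "b * x\<^sup>2 + d * y\<^sup>2 \<le> max b d * (x + y)\<^sup>2"
proof -
  have "b * x\<^sup>2 + d * y\<^sup>2 \<le> max b d * x\<^sup>2 + max b d * y\<^sup>2"
    by (intro add_mono mult_right_mono) auto
  also have "\<dots> = max b d * (x\<^sup>2 + y\<^sup>2)"
    by (simp add: distrib_left)
  also have "\<dots> \<le> max b d * (x + y)\<^sup>2"
    using assms by (intro mult_left_mono) (auto simp: power2_sum)
  finally show ?thesis .
qed

lemma dsum_frame_term_split:
  "dsum_ip ipF ipG (f, g) (map_prod jF jG (x, y)) *
     dsum_ip ipF ipG (map_prod C1 C2 (map_prod jF jG (x, y))) (f, g)
   = (ipF f (jF x) * ipF (C1 (jF x)) f + ipG g (jG y) * ipG (C2 (jG y)) g)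
     + (ipF f (jF x) * ipG (C2 (jG y)) g + ipG g (jG y) * ipF (C1 (jF x)) f)"
  by (simp add: dsum_ip_def algebra_simps)

lemma controlled_frame_dsum:
  fixes ipF :: "'h \<Rightarrow> 'h \<Rightarrow> complex" and ipG :: "'k \<Rightarrow> 'k \<Rightarrow> complex"
  assumes frame_F: "controlled_frame ipF nF jF C1 fs A B"
    and frame_G: "controlled_frame ipG nG jG C2 gs C D"
    and nF_nonneg: "\<And>f. 0 \<le> nF f" and nG_nonneg: "\<And>g. 0 \<le> nG g"
    and cross_FG: "\<And>f g. (\<lambda>i. ipF f (jF (fs i)) * ipG (C2 (jG (gs i))) g) sums 0"
    and cross_GF: "\<And>f g. (\<lambda>i. ipG g (jG (gs i)) * ipF (C1 (jF (fs i))) f) sums 0"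
  shows "controlled_frame (dsum_ip ipF ipG) (dsum_norm nF nG) (map_prod jF jG)
           (map_prod C1 C2) (\<lambda>i. (fs i, gs i)) (min A C / 2) (max B D)"
  unfolding controlled_frame_def
proof (intro conjI allI)
  have bounds: "0 < A" "A \<le> B" "0 < C" "C \<le> D"
    using frame_F frame_G unfolding controlled_frame_def by auto
  then show "0 < min A C / 2" "min A C / 2 \<le> max B D"
    by auto
  fix p :: "'h \<times> 'k"
  obtain f g where p: "p = (f, g)"
    by (cases p)
  obtain s1 where s1: "(\<lambda>i. ipF f (jF (fs i)) * ipF (C1 (jF (fs i))) f) sums s1"
    "complex_of_real (A * (nF f)\<^sup>2) \<le> s1" "s1 \<le> complex_of_real (B * (nF f)\<^sup>2)"
    using frame_F unfolding controlled_frame_def by blast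
  obtain s2 where s2: "(\<lambda>i. ipG g (jG (gs i)) * ipG (C2 (jG (gs i))) g) sums s2"
    "complex_of_real (C * (nG g)\<^sup>2) \<le> s2" "s2 \<le> complex_of_real (D * (nG g)\<^sup>2)"
    using frame_G unfolding controlled_frame_def by blast
  have "(\<lambda>i. dsum_ip ipF ipG p (map_prod jF jG (fs i, gs i)) *
          dsum_ip ipF ipG (map_prod C1 C2 (map_prod jF jG (fs i, gs i))) p)
        sums ((s1 + s2) + (0 + 0))"
    unfolding p dsum_frame_term_split by (intro sums_add s1(1) s2(1) cross_FG cross_GF)
  moreover have "complex_of_real (min A C / 2 * (dsum_norm nF nG p)\<^sup>2) \<le> s1 + s2"
  proof -
    have "complex_of_real (min A C / 2 * (dsum_norm nF nG p)\<^sup>2)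
          \<le> complex_of_real (A * (nF f)\<^sup>2 + C * (nG g)\<^sup>2)"
      using bounds weighted_sum_squares_lower[of A C "nF f" "nG g"]
      by (simp add: p dsum_norm_def less_eq_complex_def)
    also have "\<dots> \<le> s1 + s2"
      using add_mono[OF s1(2) s2(2)] by simp
    finally show ?thesis .
  qed
  moreover have "s1 + s2 \<le> complex_of_real (max B D * (dsum_norm nF nG p)\<^sup>2)"
  proof -
    have "s1 + s2 \<le> complex_of_real (B * (nF f)\<^sup>2 + D * (nG g)\<^sup>2)"
      using add_mono[OF s1(3) s2(3)] by simp
    also have "\<dots> \<le> complex_of_real (max B D * (dsum_norm nF nG p)\<^sup>2)"
      using bounds nF_nonneg[of f] nG_nonneg[of g] weighted_sum_squares_upper[of B D "nF f" "nG g"]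
      by (simp add: p dsum_norm_def less_eq_complex_def)
    finally show ?thesis .
  qed
  ultimately show "\<exists>s. (\<lambda>i. dsum_ip ipF ipG p (map_prod jF jG (fs i, gs i)) *
          dsum_ip ipF ipG (map_prod C1 C2 (map_prod jF jG (fs i, gs i))) p) sums s \<and>
        complex_of_real (min A C / 2 * (dsum_norm nF nG p)\<^sup>2) \<le> s \<and>
        s \<le> complex_of_real (max B D * (dsum_norm nF nG p)\<^sup>2)"
    by auto
qed

theorem theorem4p14:
  fixes n :: nat
    and sH :: "complex \<Rightarrow> 'a::ab_group_add \<Rightarrow> 'a" and ip1 :: "'a \<Rightarrow> 'a \<Rightarrow> 'a list \<Rightarrow> complex"
    and sK :: "complex \<Rightarrow> 'b::ab_group_add \<Rightarrow> 'b" and ip2 :: "'b \<Rightarrow> 'b \<Rightarrow> 'b list \<Rightarrow> complex"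
    and as :: "'a list" and bs :: "'b list"
    and sF :: "complex \<Rightarrow> 'hf::ab_group_add \<Rightarrow> 'hf" and ipF :: "'hf \<Rightarrow> 'hf \<Rightarrow> complex"
    and jF :: "'a \<Rightarrow> 'hf"
    and sG :: "complex \<Rightarrow> 'kg::ab_group_add \<Rightarrow> 'kg" and ipG :: "'kg \<Rightarrow> 'kg \<Rightarrow> complex"
    and jG :: "'b \<Rightarrow> 'kg"
    and C1 :: "'hf \<Rightarrow> 'hf" and C2 :: "'kg \<Rightarrow> 'kg"
    and fs :: "nat \<Rightarrow> 'a" and gs :: "nat \<Rightarrow> 'b"
    and A B Cb Db :: real
  assumes "2 \<le> n"
    and "n_hilbert_space n sH ip1" and "n_hilbert_space n sK ip2"
    and "length as = n - 1" and "length bs = n - 1"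
    and "hilbert_completion sH ip1 as sF ipF jF"
    and "hilbert_completion sK ip2 bs sG ipG jG"
    and "GB sF ipF C1" and "GB sG ipG C2"
    and "controlled_frame ipF (hnorm ipF) jF C1 fs A B"
    and "controlled_frame ipG (hnorm ipG) jG C2 gs Cb Db"
    and "\<And>f g. (\<lambda>i. ipF f (jF (fs i)) * ipG (C2 (jG (gs i))) g) sums 0"
    and "\<And>f g. (\<lambda>i. ipG g (jG (gs i)) * ipF (C1 (jF (fs i))) f) sums 0"
  shows "\<exists>A' B'. controlled_frame (dsum_ip ipF ipG) (dsum_norm (hnorm ipF) (hnorm ipG))
                  (map_prod jF jG) (map_prod C1 C2) (\<lambda>i. (fs i, gs i)) A' B'"
proof -
  have "complex_hilbert sF ipF" "complex_hilbert sG ipG"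
    using assms(6,7) unfolding hilbert_completion_def by auto
  then have "\<And>f. 0 \<le> hnorm ipF f" "\<And>g. 0 \<le> hnorm ipG g"
    by (auto intro: hnorm_nonneg)
  then show ?thesis
    using controlled_frame_dsum[OF assms(10,11)] assms(12,13) by blast
qed

end
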